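(* Let $n\in\mathbb N$. Then $B_n^{[n-1]}=\{w_I:I\subseteq[n]\}$, and the map $\alpha:\mathsf T_n\cup\{\varnothing\}\to B_n^{[n-1]}$, $I\mapsto w_{g(I)}$, where $g(I)=\{n-j+1:j\in[n]\setminus I\}$, is an isomorphism of posets, where $B_n^{[n-1]}$ carries the Bruhat order and $\mathsf T_n\cup\{\varnothing\}$ carries the tableau order extended by $A\sqsubseteq\varnothing$ for all $A$.
   Context: Tableau order: for nonempty $A,B\subseteq[n]$, $A\sqsubseteq B$ iff there is a two-column semistandard Young tableau with first column entry set $A$ and second column entry set $B$ (equivalently $\#A\ge\#B$ and $A(k)\le B(k)$ for $k\le\#B$, $A(k)$ the $k$-th smallest element); $\mathsf T_n=(2^{[n]}\setminus\{\varnothing\},\sqsubseteq)$. $B_n$ is the hyperoctahedral Coxeter group with simple reflections $s_0,\dots,s_{n-1}$ and relations $s_j^2=1$, $(s_0s_1)^4=1$, $(s_is_{i+1})^3=1$ for $i\in[n-2]$, $(s_js_k)^2=1$ for $|j-k|\ge2$; $\ell$ is its Coxeter length. $B_n^{[n-1]}=\{w\in B_n:\ell(w)<\ell(ws_i)\ \forall i\in[n-1]\}$, with the restriction of the Bruhat order ($u\le w$ iff some reduced word for $w$ contains a subword that is a reduced word for $u$). Define $w_1=s_0$, $w_{k+1}=s_kw_k$ for $k\in[n-1]$, and for $I=\{i_1<\dots<i_m\}\subseteq[n]$, $w_I=w_{i_1}\cdots w_{i_m}$ ($w_\varnothing=1$). *)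

theory Defs
  imports Main "HOL-Library.Sublist"
begin

text \<open>Words are lists of letters j < n, the letter j standing for s_j.
  weq n is the congruence on such words generated by the Coxeter relations.\<close>

inductive weq :: "nat \<Rightarrow> nat list \<Rightarrow> nat list \<Rightarrow> bool" for n :: nat where
  refl: "w \<in> lists {..<n} \<Longrightarrow> weq n w w"
| sym: "weq n u v \<Longrightarrow> weq n v u"
| trans: "weq n u v \<Longrightarrow> weq n v w \<Longrightarrow> weq n u w"
| ctx: "weq n u v \<Longrightarrow> a \<in> lists {..<n} \<Longrightarrow> b \<in> lists {..<n} \<Longrightarrow> weq n (a @ u @ b) (a @ v @ b)"
| sq: "j < n \<Longrightarrow> weq n [j, j] []"
| r01: "1 < n \<Longrightarrow> weq n (concat (replicate 4 [0, 1])) []"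
| r3: "1 \<le> i \<Longrightarrow> i + 1 < n \<Longrightarrow> weq n (concat (replicate 3 [i, i + 1])) []"
| comm: "j < n \<Longrightarrow> k < n \<Longrightarrow> j + 2 \<le> k \<or> k + 2 \<le> j \<Longrightarrow> weq n (concat (replicate 2 [j, k])) []"

definition elt :: "nat \<Rightarrow> nat list \<Rightarrow> nat list set" where
  "elt n w = {v. weq n w v}"

definition Bgrp :: "nat \<Rightarrow> nat list set set" where
  "Bgrp n = elt n ` lists {..<n}"

definition bmult :: "nat \<Rightarrow> nat list set \<Rightarrow> nat list set \<Rightarrow> nat list set" where
  "bmult n x y = {v. \<exists>a\<in>x. \<exists>b\<in>y. weq n (a @ b) v}"

definition blen :: "nat \<Rightarrow> nat list set \<Rightarrow> nat" where
  "blen n x = (LEAST k. \<exists>w\<in>x. length w = k)"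

definition reduced_word :: "nat \<Rightarrow> nat list set \<Rightarrow> nat list \<Rightarrow> bool" where
  "reduced_word n x w \<longleftrightarrow> w \<in> x \<and> length w = blen n x"

definition bruhat :: "nat \<Rightarrow> nat list set \<Rightarrow> nat list set \<Rightarrow> bool" where
  "bruhat n u w \<longleftrightarrow> (\<exists>a b. reduced_word n w a \<and> subseq b a \<and> reduced_word n u b)"

text \<open>B_n^{[n-1]}: minimal length coset representatives.\<close>
definition BnQ :: "nat \<Rightarrow> nat list set set" where
  "BnQ n = {w \<in> Bgrp n. \<forall>i\<in>{1..n-1}. blen n w < blen n (bmult n w (elt n [i]))}"

text \<open>wword (k+1) is a word for w_{k+1}: w_1 = s_0, w_{k+1} = s_k w_k.\<close>
fun wword :: "nat \<Rightarrow> nat list" where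
  "wword 0 = []"
| "wword (Suc k) = (if k = 0 then [0] else k # wword k)"

definition wI :: "nat \<Rightarrow> nat set \<Rightarrow> nat list set" where
  "wI n I = elt n (concat (map wword (sorted_list_of_set I)))"

definition kth :: "nat set \<Rightarrow> nat \<Rightarrow> nat" where
  "kth A k = sorted_list_of_set A ! (k - 1)"

definition tab_le :: "nat set \<Rightarrow> nat set \<Rightarrow> bool" where
  "tab_le A B \<longleftrightarrow> card B \<le> card A \<and> (\<forall>k\<in>{1..card B}. kth A k \<le> kth B k)"

definition ext_le :: "nat set \<Rightarrow> nat set \<Rightarrow> bool" where
  "ext_le A B \<longleftrightarrow> B = {} \<or> (A \<noteq> {} \<and> tab_le A B)"

definition gmap :: "nat \<Rightarrow> nat set \<Rightarrow> nat set" where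
  "gmap n I = {n - j + 1 | j. j \<in> {1..n} - I}"

definition alpha :: "nat \<Rightarrow> nat set \<Rightarrow> nat list set" where
  "alpha n I = wI n (gmap n I)"

end

theory Submission
  imports Defs "HOL-Combinatorics.Transposition"
begin

text \<open>\<open>B\<^sub>n\<close> acts faithfully on windows of signed permutations: the Coxeter relations hold for this
  action, and conversely every word is equivalent to the canonical word obtained by repeatedly
  removing the leftmost right descent, by an exchange argument that uses exactly the commutation and
  braid relations. Hence the Coxeter length is the number of inversions plus the sum of the negated
  entries, and \<open>B\<^sub>n\<^sup>[\<^sup>n\<^sup>-\<^sup>1\<^sup>]\<close> consists of the elements with increasing window; these are the \<open>w\<^sub>J\<close>,
  determined by the set \<open>J\<close> of negated entries. In Bruhat order \<open>w\<^sub>J \<le> w\<^sub>K\<close> iff every tail \<open>{t..}\<close>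
  contains at least as many elements of \<open>K\<close> as of \<open>J\<close>: sufficiency because the words of the \<open>w\<^sub>k\<close>
  are nested suffixes of each other, so the reduced word of \<open>w\<^sub>J\<close> is a subword of that of \<open>w\<^sub>K\<close>;
  necessity because left multiplication along a reduced word preserves this dominance of negative
  sets. The complement-reversal \<open>g\<close> turns tail dominance into the tableau order.\<close>

section \<open>Windows of signed permutations\<close>

fun swap_adj :: "nat \<Rightarrow> int list \<Rightarrow> int list" where
  "swap_adj 0 (a # b # xs) = b # a # xs"
| "swap_adj (Suc k) (x # xs) = x # swap_adj k xs"
| "swap_adj _ xs = xs"

fun neg_head :: "int list \<Rightarrow> int list" where
  "neg_head [] = []"
| "neg_head (x # xs) = - x # xs"

text \<open>Signed permutations of \<open>{1..n}\<close> are represented by their windows \<open>[X(1), \<dots>, X(n)]\<close>;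
  \<open>gen_act j\<close> is right multiplication by \<open>s\<^sub>j\<close>: \<open>s\<^sub>0\<close> negates the first entry, \<open>s\<^sub>k\<close> for \<open>k \<ge> 1\<close>
  swaps the entries in positions \<open>k\<close> and \<open>k + 1\<close>.\<close>

fun gen_act :: "nat \<Rightarrow> int list \<Rightarrow> int list" where
  "gen_act 0 X = neg_head X"
| "gen_act (Suc k) X = swap_adj k X"

definition act_word :: "nat list \<Rightarrow> int list \<Rightarrow> int list" where
  "act_word u X = foldl (\<lambda>Y j. gen_act j Y) X u"

definition id_win :: "nat \<Rightarrow> int list" where
  "id_win n = map int [1..<Suc n]"

definition window :: "nat \<Rightarrow> nat list \<Rightarrow> int list" where
  "window n u = act_word u (id_win n)"

lemma length_swap_adj [simp]: "length (swap_adj k xs) = length xs"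
  by (induction k xs rule: swap_adj.induct) auto

lemma length_neg_head [simp]: "length (neg_head xs) = length xs"
  by (cases xs) auto

lemma swap_adj_swap_adj [simp]: "swap_adj k (swap_adj k xs) = xs"
  by (induction k xs rule: swap_adj.induct) auto

lemma neg_head_neg_head [simp]: "neg_head (neg_head xs) = xs"
  by (cases xs) auto

lemma gen_act_gen_act [simp]: "gen_act j (gen_act j X) = X"
  by (cases j) simp_all

lemma length_gen_act [simp]: "length (gen_act j X) = length X"
  by (cases j) simp_all

lemma act_word_simps [simp]:
  "act_word [] X = X"
  "act_word (j # u) X = act_word u (gen_act j X)"
  "act_word (u @ v) X = act_word v (act_word u X)"
  by (simp_all add: act_word_def)

lemma length_act_word [simp]: "length (act_word u X) = length X"
  by (induction u arbitrary: X) (simp_all add: act_word_def)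

lemma window_Nil [simp]: "window n [] = id_win n"
  by (simp add: window_def)

lemma window_snoc: "window n (u @ [j]) = gen_act j (window n u)"
  by (simp add: window_def)

lemma set_swap_adj [simp]: "set (swap_adj k xs) = set xs"
  by (induction k xs rule: swap_adj.induct) auto

lemma distinct_swap_adj [simp]: "distinct (swap_adj k xs) = distinct xs"
  by (induction k xs rule: swap_adj.induct) auto

lemma length_filter_swap_adj: "length (filter P (swap_adj k xs)) = length (filter P xs)"
  by (induction k xs rule: swap_adj.induct) auto

lemma map_swap_adj: "map f (swap_adj k xs) = swap_adj k (map f xs)"
  by (induction k xs rule: swap_adj.induct) auto

lemma nth_swap_adj:
  "Suc k < length xs \<Longrightarrow>
    swap_adj k xs ! p = (if p = k then xs ! Suc k else if p = Suc k then xs ! k else xs ! p)"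
proof (induction k xs arbitrary: p rule: swap_adj.induct)
  case (1 a b xs)
  then show ?case by (cases p; cases "p - 1") auto
next
  case (2 k x xs)
  then show ?case by (cases p) auto
qed auto

lemma nth_neg_head: "xs \<noteq> [] \<Longrightarrow> neg_head xs ! p = (if p = 0 then - (xs ! 0) else xs ! p)"
  by (cases xs) (auto simp: nth_Cons split: nat.splits)

lemma swap_adj_commute: "k + 2 \<le> m \<Longrightarrow> swap_adj k (swap_adj m X) = swap_adj m (swap_adj k X)"
proof (induction k arbitrary: m X)
  case 0
  then obtain m' where "m = Suc (Suc m')" by (cases m; cases "m - 1") auto
  then show ?case by (cases X rule: remdups_adj.cases) simp_all
next
  case (Suc k)
  then obtain m' where "m = Suc m'" "k + 2 \<le> m'" by (cases m) auto
  with Suc.IH show ?case by (cases X) simp_all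
qed

lemma neg_head_swap_adj: "0 < k \<Longrightarrow> neg_head (swap_adj k X) = swap_adj k (neg_head X)"
  by (cases k; cases X) simp_all

lemma gen_act_commute:
  assumes "j + 2 \<le> k \<or> k + 2 \<le> j"
  shows "gen_act j (gen_act k X) = gen_act k (gen_act j X)"
proof -
  have "gen_act j (gen_act k X) = gen_act k (gen_act j X)" if "j + 2 \<le> k" for j k
    using that swap_adj_commute[of "j - 1" "k - 1" X]
    by (cases j; cases k) (simp_all add: neg_head_swap_adj)
  with assms show ?thesis by metis
qed

lemma swap_adj_braid:
  "Suc (Suc k) < length X \<Longrightarrow>
    swap_adj k (swap_adj (Suc k) (swap_adj k X)) = swap_adj (Suc k) (swap_adj k (swap_adj (Suc k) X))"
proof (induction k arbitrary: X)
  case 0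
  then obtain a b c r where "X = a # b # c # r"
    by (cases X rule: remdups_adj.cases; cases "tl (tl X)") auto
  then show ?case by simp
next
  case (Suc k)
  then obtain x xs where "X = x # xs" "Suc (Suc k) < length xs" by (cases X) auto
  with Suc.IH show ?case by simp
qed

lemma act_word_r01: "1 < length X \<Longrightarrow> act_word (concat (replicate 4 [0, 1])) X = X"
  by (cases X rule: remdups_adj.cases) (simp_all add: numeral_eq_Suc)

lemma act_word_r3:
  assumes "1 \<le> i" "i + 1 < length X"
  shows "act_word (concat (replicate 3 [i, i + 1])) X = X"
proof -
  obtain k where i: "i = Suc k" using assms by (cases i) auto
  have "concat (replicate 3 [i, i + 1]) = [Suc k, Suc (Suc k), Suc k, Suc (Suc k), Suc k, Suc (Suc k)]"
    by (simp add: i numeral_3_eq_3)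
  then show ?thesis
    using swap_adj_braid[of k "swap_adj (Suc k) (swap_adj k X)"] assms by (simp add: i)
qed

lemma act_word_comm:
  "j + 2 \<le> k \<or> k + 2 \<le> j \<Longrightarrow> act_word (concat (replicate 2 [j, k])) X = X"
  using gen_act_commute[of j k "gen_act j X"] by (simp add: numeral_2_eq_2)

lemma weq_imp_act_word_eq:
  "weq n u v \<Longrightarrow> length X = n \<Longrightarrow> act_word u X = act_word v X"
proof (induction arbitrary: X rule: weq.induct)
  case (ctx u v a b)
  then show ?case by simp
next
  case r01
  then show ?case using act_word_r01[of X] by simp
next
  case (r3 i)
  then show ?case using act_word_r3[of i X] by simp
next
  case (comm j k)
  then show ?case using act_word_comm[of j k X] by simp
qed simp_all

lemma length_id_win [simp]: "length (id_win n) = n"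
  by (simp add: id_win_def)

lemma weq_imp_window_eq: "weq n u v \<Longrightarrow> window n u = window n v"
  by (simp add: window_def weq_imp_act_word_eq)

text \<open>Left multiplication by \<open>s\<^sub>j\<close> acts on the entries of a window by the signed permutation
  \<open>gen_val j\<close> of \<open>\<plusminus>{1..n}\<close>.\<close>

definition gen_val :: "nat \<Rightarrow> int \<Rightarrow> int" where
  "gen_val j v = (if j = 0 then (if v = 1 \<or> v = -1 then - v else v)
     else if v = int j then int j + 1 else if v = int j + 1 then int j
     else if v = - int j then - int j - 1 else if v = - int j - 1 then - int j else v)"

lemma gen_val_uminus: "gen_val j (- v) = - gen_val j v"
  unfolding gen_val_def by auto

lemma gen_val_gen_val [simp]: "gen_val j (gen_val j v) = v"
  unfolding gen_val_def by auto

lemma gen_act_map_gen_val: "gen_act k (map (gen_val j) X) = map (gen_val j) (gen_act k X)"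
  by (cases k; cases X) (simp_all add: map_swap_adj gen_val_uminus)

lemma act_word_map_gen_val: "act_word u (map (gen_val j) X) = map (gen_val j) (act_word u X)"
  by (induction u arbitrary: X) (simp_all add: gen_act_map_gen_val)

lemma nth_id_win: "p < n \<Longrightarrow> id_win n ! p = int p + 1"
  by (simp add: id_win_def del: upt_Suc)

lemma gen_act_id_win: "j < n \<Longrightarrow> gen_act j (id_win n) = map (gen_val j) (id_win n)"
proof (rule nth_equalityI)
  fix p assume j: "j < n" and "p < length (gen_act j (id_win n))"
  then have p: "p < n" by simp
  show "gen_act j (id_win n) ! p = map (gen_val j) (id_win n) ! p"
  proof (cases j)
    case 0
    have "id_win n \<noteq> []" using j by (cases n) (auto simp: id_win_def)
    then show ?thesis using p 0 by (simp add: nth_neg_head nth_id_win gen_val_def)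
  next
    case (Suc k)
    with j p show ?thesis by (simp add: nth_swap_adj nth_id_win gen_val_def)
  qed
qed simp

lemma window_Cons: "j < n \<Longrightarrow> window n (j # u) = map (gen_val j) (window n u)"
  by (simp add: window_def gen_act_id_win act_word_map_gen_val)

definition word_val :: "nat list \<Rightarrow> int \<Rightarrow> int" where
  "word_val a = foldr (\<lambda>j f. gen_val j \<circ> f) a id"

lemma window_append_left: "a \<in> lists {..<n} \<Longrightarrow> window n (a @ w) = map (word_val a) (window n w)"
  by (induction a) (auto simp: word_val_def window_Cons)

section \<open>Coxeter length\<close>

text \<open>The Coxeter length of a signed permutation with window \<open>X\<close> is the number of inversions
  of \<open>X\<close> plus the sum of the absolute values of its negative entries.\<close>

fun inversions :: "int list \<Rightarrow> nat" where
  "inversions [] = 0"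
| "inversions (x # xs) = length (filter (\<lambda>y. y < x) xs) + inversions xs"

definition neg_set :: "int list \<Rightarrow> nat set" where
  "neg_set X = {m. 0 < m \<and> - int m \<in> set X}"

definition win_len :: "int list \<Rightarrow> nat" where
  "win_len X = inversions X + \<Sum>(neg_set X)"

definition signed_win :: "nat \<Rightarrow> int list \<Rightarrow> bool" where
  "signed_win n X \<longleftrightarrow> length X = n \<and> distinct (map abs X) \<and> set (map abs X) = {1..int n}"

definition descent :: "int list \<Rightarrow> nat \<Rightarrow> bool" where
  "descent X j \<longleftrightarrow> (if j = 0 then X ! 0 < 0 else X ! j < X ! (j - 1))"

lemma signed_win_id_win: "signed_win n (id_win n)"
proof -
  have "map abs (id_win n) = id_win n" by (simp add: id_win_def)
  moreover have "set (id_win n) = {1..int n}"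
    by (simp add: id_win_def image_int_atLeastLessThan del: upt_Suc) auto
  ultimately show ?thesis by (simp add: signed_win_def id_win_def distinct_map inj_on_def del: upt_Suc)
qed

lemma signed_win_gen_act:
  assumes "signed_win n X"
  shows "signed_win n (gen_act j X)"
proof (cases j)
  case 0
  have "map abs (neg_head X) = map abs X" by (cases X) auto
  with assms 0 show ?thesis unfolding signed_win_def by (metis gen_act.simps(1) length_neg_head)
next
  case (Suc k)
  with assms show ?thesis unfolding signed_win_def
    by (metis gen_act.simps(2) map_swap_adj length_swap_adj distinct_swap_adj set_swap_adj)
qed

lemma signed_win_window: "signed_win n (window n u)"
  by (induction u rule: rev_induct) (simp_all add: window_snoc signed_win_id_win signed_win_gen_act)

lemma signed_win_distinct: "signed_win n X \<Longrightarrow> distinct X"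
  unfolding signed_win_def by (simp add: distinct_map)

lemma signed_win_abs_bounds: "signed_win n X \<Longrightarrow> x \<in> set X \<Longrightarrow> 1 \<le> \<bar>x\<bar> \<and> \<bar>x\<bar> \<le> int n"
  unfolding signed_win_def by (metis atLeastAtMost_iff imageI list.set_map)

lemma signed_win_nonzero: "signed_win n X \<Longrightarrow> x \<in> set X \<Longrightarrow> x \<noteq> 0"
  using signed_win_abs_bounds by fastforce

lemma signed_win_uminus_notin: "signed_win n X \<Longrightarrow> x \<in> set X \<Longrightarrow> - x \<notin> set X"
proof
  assume v: "signed_win n X" and x: "x \<in> set X" and mx: "- x \<in> set X"
  have "x \<noteq> - x" using signed_win_nonzero[OF v x] by simp
  moreover have "inj_on abs (set X)" using v unfolding signed_win_def by (simp add: distinct_map)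
  ultimately show False using x mx inj_onD[of abs "set X" x "- x"] by simp
qed

lemma signed_win_in_or_uminus_in:
  "signed_win n X \<Longrightarrow> 1 \<le> a \<Longrightarrow> a \<le> int n \<Longrightarrow> a \<in> set X \<or> - a \<in> set X"
proof -
  assume v: "signed_win n X" "1 \<le> a" "a \<le> int n"
  then have "a \<in> abs ` set X" unfolding signed_win_def by (metis atLeastAtMost_iff list.set_map)
  then obtain x where "x \<in> set X" "a = \<bar>x\<bar>" by auto
  then show ?thesis by (cases "x \<ge> 0") auto
qed

lemma finite_neg_set [simp]: "finite (neg_set X)"
proof -
  have "neg_set X \<subseteq> (\<lambda>v. nat (- v)) ` set X" unfolding neg_set_def by force
  then show ?thesis using finite_subset by blast
qed

lemma zero_notin_neg_set: "0 \<notin> neg_set X"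
  by (simp add: neg_set_def)

lemma neg_set_subset: "signed_win n X \<Longrightarrow> neg_set X \<subseteq> {1..n}"
  using signed_win_abs_bounds unfolding neg_set_def by fastforce

lemma inversions_sorted: "sorted_wrt (<) X \<Longrightarrow> inversions X = 0"
  by (induction X) (auto simp: filter_empty_conv)

lemma inversions_swap_adj:
  "distinct X \<Longrightarrow> Suc k < length X \<Longrightarrow>
    inversions (swap_adj k X) + (if X ! Suc k < X ! k then 1 else 0)
      = inversions X + (if X ! k < X ! Suc k then 1 else 0)"
  by (induction k X rule: swap_adj.induct) (auto simp: length_filter_swap_adj)

lemma inversions_map:
  "(\<And>x y. x \<in> set X \<Longrightarrow> y \<in> set X \<Longrightarrow> f y < f x \<longleftrightarrow> y < x) \<Longrightarrow> inversions (map f X) = inversions X"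
proof (induction X)
  case (Cons x xs)
  have "filter ((\<lambda>z. z < f x) \<circ> f) xs = filter (\<lambda>y. y < x) xs"
    by (rule filter_cong) (use Cons.prems in auto)
  then have "filter (\<lambda>y. y < f x) (map f xs) = map f (filter (\<lambda>y. y < x) xs)"
    by (simp add: filter_map)
  then show ?case using Cons by simp
qed simp

lemma count_less_abs_head:
  assumes v: "signed_win n (x # xs)"
  shows "length (filter (\<lambda>y. y < \<bar>x\<bar>) xs) = length (filter (\<lambda>y. y < - \<bar>x\<bar>) xs) + (nat \<bar>x\<bar> - 1)"
proof -
  have ia: "inj_on abs (set (x # xs))" using v unfolding signed_win_def distinct_map by blast
  have xn: "x \<notin> set xs" and d: "distinct xs" using signed_win_distinct[OF v] by simp_all
  have sx: "set xs = set (x # xs) - {x}" using xn by auto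
  have "abs ` set xs = abs ` set (x # xs) - abs ` {x}"
    by (subst sx) (rule inj_on_image_set_diff[OF ia]; auto)
  also have "abs ` set (x # xs) = {1..int n}" using v unfolding signed_win_def by simp
  finally have A: "abs ` set xs = {1..int n} - {\<bar>x\<bar>}" by simp
  have S: "{y \<in> set xs. y < \<bar>x\<bar>} = {y \<in> set xs. y < - \<bar>x\<bar>} \<union> {y \<in> set xs. \<bar>y\<bar> < \<bar>x\<bar>}"
  proof -
    have "y \<noteq> - \<bar>x\<bar>" if "y \<in> set xs" for y
      using that xn inj_onD[OF ia, of y x] by auto
    then show ?thesis by fastforce
  qed
  have "card {y \<in> set xs. \<bar>y\<bar> < \<bar>x\<bar>} = card (abs ` {y \<in> set xs. \<bar>y\<bar> < \<bar>x\<bar>})"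
    using ia by (intro card_image[symmetric]) (auto simp: inj_on_def)
  also have "abs ` {y \<in> set xs. \<bar>y\<bar> < \<bar>x\<bar>} = {a \<in> abs ` set xs. a < \<bar>x\<bar>}" by auto
  also have "\<dots> = {1..<\<bar>x\<bar>}"
    unfolding A using signed_win_abs_bounds[OF v, of x] by auto
  finally have C: "card {y \<in> set xs. \<bar>y\<bar> < \<bar>x\<bar>} = nat \<bar>x\<bar> - 1" by simp
  have "card {y \<in> set xs. y < \<bar>x\<bar>} = card {y \<in> set xs. y < - \<bar>x\<bar>} + card {y \<in> set xs. \<bar>y\<bar> < \<bar>x\<bar>}"
    unfolding S by (rule card_Un_disjoint) auto
  then show ?thesis using C d by (metis distinct_card distinct_filter set_filter)
qed

lemma win_len_neg_head:
  assumes v: "signed_win n (x # xs)" and x: "x < 0"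
  shows "win_len (- x # xs) + 1 = win_len (x # xs)"
proof -
  define m where "m = nat (- x)"
  have xm: "x = - int m" and m0: "0 < m" using x by (auto simp: m_def)
  have xn: "x \<notin> set xs" using signed_win_distinct[OF v] by simp
  define N where "N = {m'. 0 < m' \<and> - int m' \<in> set xs}"
  have N1: "neg_set (- x # xs) = N" unfolding neg_set_def N_def using x by auto
  have N2: "neg_set (x # xs) = insert m N" unfolding neg_set_def N_def using xm m0 by auto
  have "m \<notin> N" unfolding N_def using xn xm by auto
  moreover have "finite N" using N1 finite_neg_set by metis
  ultimately have S: "\<Sum>(neg_set (x # xs)) = m + \<Sum>N" unfolding N2 by simp
  have "length (filter (\<lambda>y. y < - x) xs) = length (filter (\<lambda>y. y < x) xs) + (m - 1)"
    using count_less_abs_head[OF v] x by (simp add: m_def)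
  then show ?thesis unfolding win_len_def using S N1 m0 by simp
qed

lemma win_len_swap_adj:
  assumes v: "signed_win n X" and k: "Suc k < n"
  shows "win_len (swap_adj k X) + (if X ! Suc k < X ! k then 1 else 0)
    = win_len X + (if X ! k < X ! Suc k then 1 else 0)"
proof -
  have "neg_set (swap_adj k X) = neg_set X" by (simp add: neg_set_def)
  then show ?thesis using inversions_swap_adj[OF signed_win_distinct[OF v], of k] v k
    unfolding win_len_def signed_win_def by simp
qed

lemma signed_win_Cons_cases:
  assumes "signed_win n X" "0 < n"
  obtains x xs where "X = x # xs" "x \<noteq> 0"
  using assms signed_win_nonzero[OF assms(1)] by (cases X) (auto simp: signed_win_def)

lemma signed_win_nth_neq:
  "signed_win n X \<Longrightarrow> Suc k < n \<Longrightarrow> X ! k \<noteq> X ! Suc k"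
  using signed_win_distinct by (fastforce simp: nth_eq_iff_index_eq signed_win_def)

lemma win_len_gen_act_descent:
  assumes v: "signed_win n X" and j: "j < n" and d: "descent X j"
  shows "win_len (gen_act j X) + 1 = win_len X"
proof (cases j)
  case 0
  then obtain x xs where "X = x # xs" using v j signed_win_Cons_cases by blast
  then show ?thesis using win_len_neg_head[of n x xs] v d 0 by (simp add: descent_def)
next
  case (Suc k)
  then show ?thesis using win_len_swap_adj[OF v, of k] j d by (auto simp: descent_def)
qed

lemma win_len_gen_act_ascent:
  assumes v: "signed_win n X" and j: "j < n" and d: "\<not> descent X j"
  shows "win_len (gen_act j X) = win_len X + 1"
proof (cases j)
  case 0
  then obtain x xs where X: "X = x # xs" "x \<noteq> 0" using v j signed_win_Cons_cases by blast
  moreover have "signed_win n (- x # xs)" using signed_win_gen_act[OF v, of 0] X by simp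
  ultimately show ?thesis using win_len_neg_head[of n "- x" xs] d 0 by (simp add: descent_def)
next
  case (Suc k)
  then show ?thesis using win_len_swap_adj[OF v, of k] signed_win_nth_neq[OF v, of k] j d
    by (auto simp: descent_def)
qed

lemma descent_gen_act_ascent:
  assumes v: "signed_win n X" and j: "j < n" and d: "\<not> descent X j"
  shows "descent (gen_act j X) j"
proof (cases j)
  case 0
  then obtain x xs where "X = x # xs" "x \<noteq> 0" using v j signed_win_Cons_cases by blast
  then show ?thesis using d 0 by (simp add: descent_def)
next
  case (Suc k)
  have "Suc k < length X" using v j Suc by (simp add: signed_win_def)
  then show ?thesis using d Suc signed_win_nth_neq[OF v, of k] j by (auto simp: descent_def nth_swap_adj)
qed

lemma win_len_id_win: "win_len (id_win n) = 0"
proof -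
  have "sorted_wrt (<) (id_win n)" by (simp add: id_win_def sorted_wrt_map del: upt_Suc)
  moreover have "neg_set (id_win n) = {}" by (auto simp: neg_set_def id_win_def)
  ultimately show ?thesis by (simp add: win_len_def inversions_sorted)
qed

lemma win_len_window_le: "u \<in> lists {..<n} \<Longrightarrow> win_len (window n u) \<le> length u"
proof (induction u rule: rev_induct)
  case (snoc j u)
  then have j: "j < n" by simp
  have "win_len (gen_act j (window n u)) \<le> win_len (window n u) + 1"
    using win_len_gen_act_descent[OF signed_win_window j] win_len_gen_act_ascent[OF signed_win_window j]
    by (cases "descent (window n u) j") force+
  with snoc show ?case by (simp add: window_snoc)
qed (simp add: win_len_id_win)

section \<open>Canonical words and faithfulness\<close>

lemma weq_imp_lists: "weq n u v \<Longrightarrow> u \<in> lists {..<n} \<and> v \<in> lists {..<n}"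
  by (induction rule: weq.induct) auto

lemma weq_append_left: "weq n u v \<Longrightarrow> w \<in> lists {..<n} \<Longrightarrow> weq n (w @ u) (w @ v)"
  using weq.ctx[of n u v w "[]"] by simp

lemma weq_append_right: "weq n u v \<Longrightarrow> w \<in> lists {..<n} \<Longrightarrow> weq n (u @ w) (v @ w)"
  using weq.ctx[of n u v "[]" w] by simp

lemma weq_cancel: "j < n \<Longrightarrow> x \<in> lists {..<n} \<Longrightarrow> weq n (x @ [j, j]) x"
  using weq_append_left[OF weq.sq, of j n x] by simp

lemma weq_append_rev: "w \<in> lists {..<n} \<Longrightarrow> weq n (w @ rev w) []"
proof (induction w)
  case (Cons a w)
  then have "weq n ([a] @ (w @ rev w) @ [a]) ([a] @ [] @ [a])"
    by (intro weq.ctx) auto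
  moreover have "weq n [a, a] []" using Cons.prems by (simp add: weq.sq)
  ultimately show ?case by (auto intro: weq.trans)
qed (simp add: weq.refl)

text \<open>All generators are involutions, so a relator \<open>x @ y\<close> yields \<open>x = y\<^sup>-\<^sup>1 = rev y\<close>.\<close>

lemma weq_relator_imp_weq_rev:
  assumes "weq n (x @ y) []"
  shows "weq n x (rev y)"
proof -
  have x: "x \<in> lists {..<n}" and y: "y \<in> lists {..<n}" using weq_imp_lists[OF assms] by auto
  have "weq n (x @ (y @ rev y) @ []) (x @ [] @ [])"
    using weq.ctx[OF weq_append_rev[OF y] x, of "[]"] by simp
  moreover have "weq n ([] @ (x @ y) @ rev y) ([] @ [] @ rev y)"
    using weq.ctx[OF assms, of "[]" "rev y"] y by (simp add: in_lists_conv_set)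
  ultimately show ?thesis by (auto intro: weq.trans weq.sym)
qed

lemma weq_commute:
  "j < n \<Longrightarrow> k < n \<Longrightarrow> j + 2 \<le> k \<or> k + 2 \<le> j \<Longrightarrow> weq n [j, k] [k, j]"
  using weq_relator_imp_weq_rev[of n "[j, k]" "[j, k]"] weq.comm[of j n k]
  by (simp add: numeral_2_eq_2)

lemma weq_braid3: "1 \<le> i \<Longrightarrow> i + 1 < n \<Longrightarrow> weq n [i, i + 1, i] [i + 1, i, i + 1]"
  using weq_relator_imp_weq_rev[of n "[i, i + 1, i]" "[i + 1, i, i + 1]"] weq.r3[of i n]
  by (simp add: numeral_3_eq_3)

lemma weq_braid4: "1 < n \<Longrightarrow> weq n [1, 0, 1, 0] [0, 1, 0, 1]"
  using weq_relator_imp_weq_rev[of n "[0, 1, 0, 1]" "[0, 1, 0, 1]"] weq.r01[of n]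
  by (simp add: numeral_eq_Suc weq.sym)

text \<open>The canonical word strips off the leftmost right descent, repeatedly; the fuel \<open>win_len X\<close>
  is exactly the number of letters produced (\<open>length_canon_word\<close>).\<close>

definition first_descent :: "nat \<Rightarrow> int list \<Rightarrow> nat" where
  "first_descent n X = (LEAST j. j < n \<and> descent X j)"

fun canon_iter :: "nat \<Rightarrow> nat \<Rightarrow> int list \<Rightarrow> nat list" where
  "canon_iter n 0 X = []"
| "canon_iter n (Suc k) X = (if \<exists>j<n. descent X j
     then canon_iter n k (gen_act (first_descent n X) X) @ [first_descent n X] else [])"

definition canon_word :: "nat \<Rightarrow> int list \<Rightarrow> nat list" where
  "canon_word n X = canon_iter n (win_len X) X"

lemma first_descent:
  assumes "j < n" "descent X j"
  shows "first_descent n X < n" "descent X (first_descent n X)" "first_descent n X \<le> j"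
    and "i < first_descent n X \<Longrightarrow> \<not> descent X i"
proof -
  have "first_descent n X < n \<and> descent X (first_descent n X)"
    unfolding first_descent_def by (rule LeastI[of _ j]) (use assms in blast)
  then show "first_descent n X < n" "descent X (first_descent n X)" by auto
  show "first_descent n X \<le> j" unfolding first_descent_def by (rule Least_le) (use assms in blast)
  show "i < first_descent n X \<Longrightarrow> \<not> descent X i"
    using not_less_Least[of i "\<lambda>j. j < n \<and> descent X j"] \<open>first_descent n X < n\<close>
    unfolding first_descent_def by auto
qed

lemma canon_iter_lists: "canon_iter n k X \<in> lists {..<n}"
  by (induction k arbitrary: X) (auto intro: first_descent(1))

lemma canon_word_lists: "canon_word n X \<in> lists {..<n}"
  by (simp add: canon_word_def canon_iter_lists)

lemma canon_word_unfold:
  assumes v: "signed_win n X" and "j < n" "descent X j"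
  shows "canon_word n X = canon_word n (gen_act (first_descent n X) X) @ [first_descent n X]"
proof -
  have "win_len X = Suc (win_len (gen_act (first_descent n X) X))"
    using win_len_gen_act_descent[OF v first_descent(1,2)[OF assms(2,3)]] by simp
  then show ?thesis unfolding canon_word_def using assms(2,3) by auto
qed

lemma no_descent_imp_sorted:
  assumes v: "signed_win n X" and nd: "\<And>j. 1 \<le> j \<Longrightarrow> j < n \<Longrightarrow> \<not> descent X j"
  shows "sorted_wrt (<) X"
proof -
  have "X ! i < X ! Suc i" if "Suc i < length X" for i
    using nd[of "Suc i"] signed_win_nth_neq[OF v, of i] that v
    by (fastforce simp: descent_def signed_win_def)
  then show ?thesis by (simp add: sorted_wrt_iff_nth_Suc_transp)
qed

lemma sorted_imp_not_descent:
  assumes "sorted_wrt (<) X" "1 \<le> j" "j < length X"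
  shows "\<not> descent X j"
  using sorted_wrt_nth_less[OF assms(1), of "j - 1" j] assms by (simp add: descent_def)

lemma no_descent_imp_win_len_0:
  assumes v: "signed_win n X" and nd: "\<And>j. j < n \<Longrightarrow> \<not> descent X j"
  shows "win_len X = 0"
proof -
  have s: "sorted_wrt (<) X" using no_descent_imp_sorted[OF v] nd by blast
  have "neg_set X = {}"
  proof (cases "n = 0")
    case False
    then obtain x xs where X: "X = x # xs" "x \<noteq> 0" using v signed_win_Cons_cases by blast
    then have "0 < x" using nd[of 0] False by (simp add: descent_def)
    moreover have "\<forall>y\<in>set xs. x < y" using s X by simp
    ultimately show ?thesis using X by (auto simp: neg_set_def)
  qed (use v in \<open>simp add: neg_set_def signed_win_def\<close>)
  then show ?thesis using s by (simp add: win_len_def inversions_sorted)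
qed

lemma length_canon_word: "signed_win n X \<Longrightarrow> length (canon_word n X) = win_len X"
proof (induction "win_len X" arbitrary: X rule: less_induct)
  case less
  show ?case
  proof (cases "\<exists>j<n. descent X j")
    case True
    then obtain j where j: "j < n" "descent X j" by blast
    let ?d = "first_descent n X"
    have L: "win_len (gen_act ?d X) + 1 = win_len X"
      using win_len_gen_act_descent[OF less.prems first_descent(1,2)[OF j]] .
    then have "length (canon_word n (gen_act ?d X)) = win_len (gen_act ?d X)"
      using less.hyps signed_win_gen_act[OF less.prems] by simp
    then show ?thesis using canon_word_unfold[OF less.prems j] L by simp
  next
    case False
    then show ?thesis using no_descent_imp_win_len_0[OF less.prems] by (simp add: canon_word_def)
  qed
qed

lemma descent_gen_act_far:
  assumes v: "signed_win n X" and d: "d < n" and far: "d + 2 \<le> j \<or> j + 2 \<le> d"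
  shows "descent (gen_act d X) j = descent X j"
proof (cases d)
  case 0
  have "X \<noteq> []" using v d by (auto simp: signed_win_def)
  then show ?thesis using 0 far by (auto simp: descent_def nth_neg_head)
next
  case (Suc k)
  have "Suc k < length X" using v d Suc by (simp add: signed_win_def)
  then show ?thesis using Suc far by (cases j) (auto simp: descent_def nth_swap_adj)
qed

definition canon_exchange :: "nat \<Rightarrow> int list \<Rightarrow> bool" where
  "canon_exchange n X \<longleftrightarrow>
    (\<forall>j<n. descent X j \<longrightarrow> weq n (canon_word n X) (canon_word n (gen_act j X) @ [j]))"

fun descent_path :: "nat \<Rightarrow> int list \<Rightarrow> nat list \<Rightarrow> bool" where
  "descent_path n X [] \<longleftrightarrow> True"
| "descent_path n X (i # p) \<longleftrightarrow> i < n \<and> descent X i \<and> descent_path n (gen_act i X) p"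

lemma canon_word_descent_path:
  assumes IH: "\<And>Y. signed_win n Y \<Longrightarrow> win_len Y < L \<Longrightarrow> canon_exchange n Y"
    and "signed_win n X" "win_len X < L" "descent_path n X p"
  shows "weq n (canon_word n X) (canon_word n (act_word p X) @ rev p)"
  using assms(2-)
proof (induction p arbitrary: X)
  case Nil
  then show ?case by (simp add: weq.refl canon_word_lists)
next
  case (Cons i p)
  then have i: "i < n" "descent X i" and p: "descent_path n (gen_act i X) p" by simp_all
  have "weq n (canon_word n X) (canon_word n (gen_act i X) @ [i])"
    using IH[OF Cons.prems(1,2)] i by (simp add: canon_exchange_def)
  moreover have "weq n (canon_word n (gen_act i X)) (canon_word n (act_word p (gen_act i X)) @ rev p)"
    using Cons.IH[OF signed_win_gen_act[OF Cons.prems(1)] _ p]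
      win_len_gen_act_descent[OF Cons.prems(1) i] Cons.prems(2) by simp
  then have "weq n (canon_word n (gen_act i X) @ [i]) (canon_word n (act_word p (gen_act i X)) @ rev p @ [i])"
    using weq_append_right[of n _ _ "[i]"] i by (metis append.assoc lists.Cons lists.Nil lessThan_iff)
  ultimately show ?case by (simp add: weq.trans)
qed

text \<open>Exchange property, by induction on the length: \<open>X s\<^sub>d\<close> and \<open>X s\<^sub>j\<close> descend to a common window
  along the two sides of the commutation or braid relation between \<open>s\<^sub>d\<close> and \<open>s\<^sub>j\<close>.\<close>

lemma canon_exchange_two_paths:
  assumes IH: "\<And>Y. signed_win n Y \<Longrightarrow> win_len Y < win_len X \<Longrightarrow> canon_exchange n Y"
    and v: "signed_win n X" and j: "j < n" "descent X j" and d: "d = first_descent n X"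
    and p: "descent_path n (gen_act d X) p" and q: "descent_path n (gen_act j X) q"
    and meet: "act_word p (gen_act d X) = act_word q (gen_act j X)"
    and rel: "weq n (rev p @ [d]) (rev q @ [j])"
  shows "weq n (canon_word n X) (canon_word n (gen_act j X) @ [j])"
proof -
  let ?V = "canon_word n (act_word q (gen_act j X))"
  have dn: "d < n" "descent X d" using first_descent(1,2)[OF j] d by simp_all
  have Y: "weq n (canon_word n (gen_act d X)) (?V @ rev p)"
    using canon_word_descent_path[OF IH signed_win_gen_act[OF v] _ p] meet
      win_len_gen_act_descent[OF v dn] by simp
  have Z: "weq n (canon_word n (gen_act j X)) (?V @ rev q)"
    using canon_word_descent_path[OF IH signed_win_gen_act[OF v] _ q]
      win_len_gen_act_descent[OF v j] by simp
  have "canon_word n X = canon_word n (gen_act d X) @ [d]"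
    using canon_word_unfold[OF v j] d by simp
  also have "weq n \<dots> (?V @ rev p @ [d])"
    using weq_append_right[OF Y, of "[d]"] dn by simp
  finally have "weq n (canon_word n X) (?V @ rev q @ [j])"
    using weq_append_left[OF rel canon_word_lists] by (auto intro: weq.trans)
  moreover have "weq n (?V @ rev q @ [j]) (canon_word n (gen_act j X) @ [j])"
    using weq.sym[OF weq_append_right[OF Z, of "[j]"]] j by simp
  ultimately show ?thesis by (rule weq.trans)
qed

lemma descent_paths_commute:
  assumes v: "signed_win n X" and "d < n" "j < n" "d + 2 \<le> j" "descent X d" "descent X j"
  shows "descent_path n (gen_act d X) [j]" "descent_path n (gen_act j X) [d]"
    and "act_word [j] (gen_act d X) = act_word [d] (gen_act j X)"
  using assms descent_gen_act_far[OF v, of d j] descent_gen_act_far[OF v, of j d]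
    gen_act_commute[of j d X] by simp_all

lemma descent_paths_braid3:
  assumes v: "signed_win n X" and l: "Suc (Suc k) < n"
    and d: "descent X (Suc k)" "descent X (Suc (Suc k))"
  shows "descent_path n (gen_act (Suc k) X) [Suc (Suc k), Suc k]"
    and "descent_path n (gen_act (Suc (Suc k)) X) [Suc k, Suc (Suc k)]"
    and "act_word [Suc (Suc k), Suc k] (gen_act (Suc k) X)
      = act_word [Suc k, Suc (Suc k)] (gen_act (Suc (Suc k)) X)"
proof -
  have l': "Suc (Suc k) < length X" using v l by (simp add: signed_win_def)
  have "X ! Suc k < X ! k" "X ! Suc (Suc k) < X ! Suc k" using d by (simp_all add: descent_def)
  with l' l show "descent_path n (gen_act (Suc k) X) [Suc (Suc k), Suc k]"
    and "descent_path n (gen_act (Suc (Suc k)) X) [Suc k, Suc (Suc k)]"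
    by (simp_all add: descent_def nth_swap_adj)
  show "act_word [Suc (Suc k), Suc k] (gen_act (Suc k) X)
      = act_word [Suc k, Suc (Suc k)] (gen_act (Suc (Suc k)) X)"
    using swap_adj_braid[OF l'] by simp
qed

lemma descent_paths_braid4:
  assumes v: "signed_win n X" and l: "1 < n" and d: "descent X 0" "descent X 1"
  shows "descent_path n (gen_act 0 X) [1, 0, 1]" "descent_path n (gen_act 1 X) [0, 1, 0]"
    and "act_word [1, 0, 1] (gen_act 0 X) = act_word [0, 1, 0] (gen_act 1 X)"
proof -
  obtain x y r where "X = x # y # r"
    using v l by (cases X rule: remdups_adj.cases) (auto simp: signed_win_def)
  with d l show "descent_path n (gen_act 0 X) [1, 0, 1]" "descent_path n (gen_act 1 X) [0, 1, 0]"
    and "act_word [1, 0, 1] (gen_act 0 X) = act_word [0, 1, 0] (gen_act 1 X)"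
    by (simp_all add: descent_def)
qed

lemma canon_exchange: "signed_win n X \<Longrightarrow> canon_exchange n X"
proof (induction "win_len X" arbitrary: X rule: less_induct)
  case less
  have IH: "\<And>Y. signed_win n Y \<Longrightarrow> win_len Y < win_len X \<Longrightarrow> canon_exchange n Y"
    using less.hyps by blast
  note v = less.prems
  show ?case unfolding canon_exchange_def
  proof (intro allI impI)
    fix j assume j: "j < n" "descent X j"
    define d where "d = first_descent n X"
    have dn: "d < n" "descent X d" "d \<le> j" using first_descent[OF j] by (simp_all add: d_def)
    consider "j = d" | "d + 2 \<le> j" | k where "d = Suc k" "j = Suc (Suc k)" | "d = 0" "j = 1"
    proof -
      have "j = d \<or> j = Suc d \<or> d + 2 \<le> j" using dn(3) by linarith
      with that show thesis by (cases d) auto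
    qed
    then show "weq n (canon_word n X) (canon_word n (gen_act j X) @ [j])"
    proof cases
      case 1
      have "canon_word n X \<in> lists {..<n}" by (rule canon_word_lists)
      then show ?thesis using canon_word_unfold[OF v j] 1 d_def by (metis weq.refl)
    next
      case 2
      with descent_paths_commute[OF v dn(1) j(1) _ dn(2) j(2)] show ?thesis
        by (intro canon_exchange_two_paths[OF IH v j d_def, of "[j]" "[d]"])
          (simp_all add: weq_commute dn j)
    next
      case (3 k)
      with descent_paths_braid3[of n X k] weq_braid3[of "Suc k" n] v j dn show ?thesis
        by (intro canon_exchange_two_paths[OF IH v j d_def,
              of "[Suc (Suc k), Suc k]" "[Suc k, Suc (Suc k)]"]) simp_all
    next
      case 4
      with descent_paths_braid4[of n X] weq_braid4[of n] v j dn show ?thesis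
        by (intro canon_exchange_two_paths[OF IH v j d_def, of "[1, 0, 1]" "[0, 1, 0]"]) simp_all
    qed
  qed
qed

lemma weq_canon_word: "u \<in> lists {..<n} \<Longrightarrow> weq n u (canon_word n (window n u))"
proof (induction u rule: rev_induct)
  case Nil
  then show ?case by (simp add: canon_word_def win_len_id_win weq.refl)
next
  case (snoc j u)
  then have j: "j < n" and u: "u \<in> lists {..<n}" by auto
  define X where "X = window n u"
  have v: "signed_win n X" by (simp add: X_def signed_win_window)
  have "weq n (u @ [j]) (canon_word n X @ [j])"
    using weq_append_right[OF snoc.IH[OF u], of "[j]"] j by (simp add: X_def)
  moreover have "weq n (canon_word n X @ [j]) (canon_word n (gen_act j X))"
  proof (cases "descent X j")
    case True
    then have "weq n (canon_word n X @ [j]) (canon_word n (gen_act j X) @ [j, j])"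
      using weq_append_right[of n _ _ "[j]"] canon_exchange[OF v] j
      by (fastforce simp: canon_exchange_def)
    then show ?thesis using weq_cancel[OF j canon_word_lists] weq.trans by blast
  next
    case False
    have "canon_exchange n (gen_act j X)" using canon_exchange[OF signed_win_gen_act[OF v]] .
    then have "weq n (canon_word n (gen_act j X)) (canon_word n (gen_act j (gen_act j X)) @ [j])"
      using descent_gen_act_ascent[OF v j False] j unfolding canon_exchange_def by blast
    then show ?thesis by (simp add: weq.sym)
  qed
  ultimately show ?case by (simp add: X_def window_snoc weq.trans)
qed

theorem weq_iff_window_eq:
  "weq n u v \<longleftrightarrow> u \<in> lists {..<n} \<and> v \<in> lists {..<n} \<and> window n u = window n v"
  using weq_imp_lists weq_imp_window_eq weq_canon_word weq.sym weq.trans by metis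

lemma mem_elt: "v \<in> elt n u \<longleftrightarrow> weq n u v"
  by (simp add: elt_def)

lemma elt_eq: "weq n u v \<Longrightarrow> elt n u = elt n v"
  unfolding elt_def using weq.sym weq.trans by blast

lemma blen_elt: "u \<in> lists {..<n} \<Longrightarrow> blen n (elt n u) = win_len (window n u)"
  unfolding blen_def
proof (rule Least_equality)
  assume u: "u \<in> lists {..<n}"
  have "canon_word n (window n u) \<in> elt n u" using weq_canon_word[OF u] by (simp add: mem_elt)
  then show "\<exists>w\<in>elt n u. length w = win_len (window n u)"
    using length_canon_word[OF signed_win_window] by blast
next
  fix k assume "\<exists>w\<in>elt n u. length w = k"
  then obtain w where "weq n u w" "length w = k" by (auto simp: mem_elt)
  then show "win_len (window n u) \<le> k"
    using win_len_window_le weq_iff_window_eq by metis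
qed

lemma bmult_elt:
  assumes u: "u \<in> lists {..<n}" and v: "v \<in> lists {..<n}"
  shows "bmult n (elt n u) (elt n v) = elt n (u @ v)"
proof (rule set_eqI)
  fix x
  show "x \<in> bmult n (elt n u) (elt n v) \<longleftrightarrow> x \<in> elt n (u @ v)"
  proof
    assume "x \<in> bmult n (elt n u) (elt n v)"
    then obtain a b where ab: "weq n u a" "weq n v b" "weq n (a @ b) x"
      by (auto simp: bmult_def mem_elt)
    have "weq n (u @ v) (a @ v)" using weq_append_right[OF ab(1) v] .
    moreover have "weq n (a @ v) (a @ b)" using weq_append_left[OF ab(2)] weq_imp_lists[OF ab(1)] by simp
    ultimately show "x \<in> elt n (u @ v)" using ab(3) weq.trans by (metis mem_elt)
  next
    assume "x \<in> elt n (u @ v)"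
    then have "weq n (u @ v) x" by (simp add: mem_elt)
    moreover have "u \<in> elt n u" "v \<in> elt n v" using u v by (simp_all add: mem_elt weq.refl)
    ultimately show "x \<in> bmult n (elt n u) (elt n v)"
      unfolding bmult_def by blast
  qed
qed

section \<open>The elements \<open>w\<^sub>J\<close> and minimal coset representatives\<close>

definition word_of :: "nat set \<Rightarrow> nat list" where
  "word_of J = concat (map wword (sorted_list_of_set J))"

lemma wI_eq_elt_word_of: "wI n J = elt n (word_of J)"
  by (simp add: wI_def word_of_def)

lemma length_wword [simp]: "length (wword k) = k"
  by (induction k) auto

lemma set_wword_subset: "set (wword k) \<subseteq> {..<k}"
  by (induction k) auto

lemma wword_lists: "k \<le> n \<Longrightarrow> wword k \<in> lists {..<n}"
  using set_wword_subset[of k] by auto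

lemma word_of_lists: "J \<subseteq> {1..n} \<Longrightarrow> word_of J \<in> lists {..<n}"
  using finite_subset[of J "{1..n}"] set_wword_subset by (fastforce simp: word_of_def)

text \<open>Left multiplication by \<open>w\<^sub>k = s\<^sub>k\<^sub>-\<^sub>1 \<cdots> s\<^sub>1 s\<^sub>0\<close> maps \<open>1 \<mapsto> -k\<close> and \<open>v \<mapsto> v - 1\<close> for
  \<open>2 \<le> v \<le> k\<close> (and acts oddly), leaving larger values fixed.\<close>

definition wword_val :: "nat \<Rightarrow> int \<Rightarrow> int" where
  "wword_val k v = (if v = 1 then - int k else if v = -1 then int k
     else if 2 \<le> v \<and> v \<le> int k then v - 1 else if - int k \<le> v \<and> v \<le> -2 then v + 1 else v)"

lemma word_val_wword: "1 \<le> k \<Longrightarrow> word_val (wword k) = wword_val k"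
proof (induction k)
  case (Suc k)
  show ?case
  proof (cases "k = 0")
    case True
    then show ?thesis by (auto simp: word_val_def wword_val_def gen_val_def fun_eq_iff)
  next
    case False
    then have "word_val (wword (Suc k)) = gen_val k \<circ> wword_val k"
      using Suc by (simp add: word_val_def)
    then show ?thesis using False by (auto simp: wword_val_def gen_val_def fun_eq_iff)
  qed
qed simp

lemma window_wword_append:
  "1 \<le> k \<Longrightarrow> k \<le> n \<Longrightarrow> window n (wword k @ w) = map (wword_val k) (window n w)"
  using window_append_left[OF wword_lists, of k n w] word_val_wword by simp

lemma signed_win_entry_cases:
  assumes v: "signed_win n W" and gt: "\<forall>m\<in>neg_set W. k < m" and x: "x \<in> set W"
  shows "x < - int k \<or> 0 < x"
proof (rule ccontr)
  assume "\<not> (x < - int k \<or> 0 < x)"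
  then have "nat (- x) \<in> neg_set W" "nat (- x) \<le> k"
    using signed_win_nonzero[OF v x] x by (auto simp: neg_set_def)
  then show False using gt by auto
qed

lemma sorted_map_wword_val:
  assumes v: "signed_win n W" and s: "sorted_wrt (<) W" and k: "1 \<le> k"
    and gt: "\<forall>m\<in>neg_set W. k < m"
  shows "sorted_wrt (<) (map (wword_val k) W)"
proof -
  have "wword_val k x < wword_val k y" if "x \<in> set W" "y \<in> set W" "x < y" for x y
    using signed_win_entry_cases[OF v gt that(1)] signed_win_entry_cases[OF v gt that(2)] that(3) k
    by (auto simp: wword_val_def)
  then show ?thesis using s by (auto simp: sorted_wrt_map elim!: sorted_wrt_mono_rel[rotated])
qed

lemma neg_set_map_wword_val:
  assumes v: "signed_win n W" and k: "1 \<le> k" "k \<le> n" and gt: "\<forall>m\<in>neg_set W. k < m"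
  shows "neg_set (map (wword_val k) W) = insert k (neg_set W)"
proof (rule set_eqI)
  fix m
  show "m \<in> neg_set (map (wword_val k) W) \<longleftrightarrow> m \<in> insert k (neg_set W)"
  proof
    assume "m \<in> neg_set (map (wword_val k) W)"
    then obtain x where x: "x \<in> set W" "wword_val k x = - int m" "0 < m"
      by (auto simp: neg_set_def)
    then show "m \<in> insert k (neg_set W)"
      using signed_win_entry_cases[OF v gt x(1)] k by (auto simp: wword_val_def neg_set_def split: if_splits)
  next
    assume "m \<in> insert k (neg_set W)"
    then show "m \<in> neg_set (map (wword_val k) W)"
    proof
      assume "m = k"
      have "1 \<notin> neg_set W" using gt k by auto
      then have "1 \<in> set W"
        using signed_win_in_or_uminus_in[OF v, of 1] k by (simp add: neg_set_def)
      with \<open>m = k\<close> show ?thesis using k by (force simp: neg_set_def wword_val_def)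
    next
      assume m: "m \<in> neg_set W"
      then have "- int m \<in> set W" "k < m" using gt by (auto simp: neg_set_def)
      moreover have "wword_val k (- int m) = - int m" using \<open>k < m\<close> k by (auto simp: wword_val_def)
      ultimately show ?thesis by (force simp: neg_set_def)
    qed
  qed
qed

lemma window_word_of:
  assumes "J \<subseteq> {1..n}"
  shows "sorted_wrt (<) (window n (word_of J))" "neg_set (window n (word_of J)) = J"
proof -
  have "sorted_wrt (<) (window n (concat (map wword L))) \<and> neg_set (window n (concat (map wword L))) = set L"
    if "sorted_wrt (<) L" "set L \<subseteq> {1..n}" for L
    using that
  proof (induction L)
    case Nil
    have "sorted_wrt (<) (id_win n)" by (simp add: id_win_def sorted_wrt_map del: upt_Suc)
    moreover have "neg_set (id_win n) = {}" by (auto simp: neg_set_def id_win_def)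
    ultimately show ?case by simp
  next
    case (Cons k L)
    then show ?case
      using sorted_map_wword_val[OF signed_win_window, of n "concat (map wword L)" k]
        neg_set_map_wword_val[OF signed_win_window, of k n "concat (map wword L)"]
      by (simp add: window_wword_append)
  qed
  moreover have "finite J" using assms finite_subset by blast
  ultimately show "sorted_wrt (<) (window n (word_of J))" "neg_set (window n (word_of J)) = J"
    using assms by (simp_all add: word_of_def)
qed

lemma mem_signed_win_iff:
  assumes v: "signed_win n X"
  shows "x \<in> set X \<longleftrightarrow>
    (x < 0 \<and> nat (- x) \<in> neg_set X) \<or> (0 < x \<and> x \<le> int n \<and> nat x \<notin> neg_set X)"
proof -
  have "x \<in> set X \<longleftrightarrow> (x < 0 \<and> x \<in> set X) \<or> (0 < x \<and> x \<in> set X)"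
    using signed_win_nonzero[OF v] by force
  moreover have "(x < 0 \<and> x \<in> set X) \<longleftrightarrow> (x < 0 \<and> nat (- x) \<in> neg_set X)"
    by (auto simp: neg_set_def)
  moreover have "(0 < x \<and> x \<in> set X) \<longleftrightarrow> (0 < x \<and> x \<le> int n \<and> nat x \<notin> neg_set X)"
  proof -
    have "0 < x \<Longrightarrow> x \<in> set X \<Longrightarrow> x \<le> int n" using signed_win_abs_bounds[OF v] by fastforce
    moreover have "0 < x \<Longrightarrow> x \<in> set X \<Longrightarrow> nat x \<notin> neg_set X"
      using signed_win_uminus_notin[OF v] by (auto simp: neg_set_def)
    moreover have "0 < x \<Longrightarrow> x \<le> int n \<Longrightarrow> nat x \<notin> neg_set X \<Longrightarrow> x \<in> set X"
      using signed_win_in_or_uminus_in[OF v, of x] by (auto simp: neg_set_def)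
    ultimately show ?thesis by blast
  qed
  ultimately show ?thesis by blast
qed

lemma sorted_signed_win_eqI:
  assumes "signed_win n X" "signed_win n Y" "sorted_wrt (<) X" "sorted_wrt (<) Y"
    and "neg_set X = neg_set Y"
  shows "X = Y"
proof -
  have "set X = set Y" using mem_signed_win_iff[OF assms(1)] mem_signed_win_iff[OF assms(2)] assms(5) by blast
  then show ?thesis using strict_sorted_equal[OF assms(4,3)] by simp
qed

lemma sorted_window_eq_window_word_of:
  assumes "sorted_wrt (<) (window n u)"
  shows "window n u = window n (word_of (neg_set (window n u)))"
  using sorted_signed_win_eqI[OF signed_win_window signed_win_window assms]
    window_word_of[OF neg_set_subset[OF signed_win_window]] by simp

lemma blen_elt_snoc:
  "u \<in> lists {..<n} \<Longrightarrow> i < n \<Longrightarrow>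
    blen n (bmult n (elt n u) (elt n [i])) = win_len (gen_act i (window n u))"
  by (simp add: bmult_elt blen_elt window_snoc)

text \<open>An element lies in \<open>B\<^sub>n\<^sup>[\<^sup>n\<^sup>-\<^sup>1\<^sup>]\<close> iff it has no right descent among \<open>s\<^sub>1, \<dots>, s\<^sub>n\<^sub>-\<^sub>1\<close>, i.e.
  iff its window is increasing.\<close>

lemma elt_in_BnQ_iff:
  assumes u: "u \<in> lists {..<n}"
  shows "elt n u \<in> BnQ n \<longleftrightarrow> sorted_wrt (<) (window n u)"
proof -
  let ?X = "window n u"
  have v: "signed_win n ?X" by (rule signed_win_window)
  have "blen n (elt n u) < blen n (bmult n (elt n u) (elt n [i])) \<longleftrightarrow> \<not> descent ?X i"
    if "i \<in> {1..n - 1}" for i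
  proof -
    from that have i: "i < n" by auto
    show ?thesis
      using win_len_gen_act_descent[OF v i] win_len_gen_act_ascent[OF v i]
      by (auto simp: blen_elt[OF u] blen_elt_snoc[OF u i])
  qed
  then have "elt n u \<in> BnQ n \<longleftrightarrow> (\<forall>i\<in>{1..n - 1}. \<not> descent ?X i)"
    using u unfolding BnQ_def Bgrp_def by auto
  also have "\<dots> \<longleftrightarrow> sorted_wrt (<) ?X"
  proof
    assume "\<forall>i\<in>{1..n - 1}. \<not> descent ?X i"
    then show "sorted_wrt (<) ?X" by (intro no_descent_imp_sorted[OF v]) auto
  next
    assume "sorted_wrt (<) ?X"
    then show "\<forall>i\<in>{1..n - 1}. \<not> descent ?X i"
      using sorted_imp_not_descent v by (auto simp: signed_win_def)
  qed
  finally show ?thesis .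
qed

lemma BnQ_eq: "BnQ n = wI n ` Pow {1..n}"
proof
  show "BnQ n \<subseteq> wI n ` Pow {1..n}"
  proof
    fix x assume x: "x \<in> BnQ n"
    then obtain u where u: "u \<in> lists {..<n}" "x = elt n u" by (auto simp: BnQ_def Bgrp_def)
    define J where "J = neg_set (window n u)"
    have J: "J \<subseteq> {1..n}" using neg_set_subset[OF signed_win_window] by (simp add: J_def)
    have "window n u = window n (word_of J)"
      using sorted_window_eq_window_word_of elt_in_BnQ_iff[OF u(1)] x u(2) by (simp add: J_def)
    then have "weq n u (word_of J)" using u(1) word_of_lists[OF J] weq_iff_window_eq by blast
    then have "x = wI n J" using u(2) elt_eq by (simp add: wI_eq_elt_word_of)
    with J show "x \<in> wI n ` Pow {1..n}" by blast
  qed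
  show "wI n ` Pow {1..n} \<subseteq> BnQ n"
    using elt_in_BnQ_iff[OF word_of_lists] window_word_of(1) by (auto simp: wI_eq_elt_word_of)
qed

lemma inj_on_wI: "inj_on (wI n) (Pow {1..n})"
proof (rule inj_onI)
  fix J K assume J: "J \<in> Pow {1..n}" and K: "K \<in> Pow {1..n}" and "wI n J = wI n K"
  then have "word_of K \<in> elt n (word_of J)"
    using word_of_lists[of K n] by (simp add: wI_eq_elt_word_of mem_elt weq.refl)
  then have "window n (word_of J) = window n (word_of K)"
    by (simp add: mem_elt weq_iff_window_eq)
  then show "J = K" using window_word_of(2) J K by (metis PowD)
qed

section \<open>Bruhat order among the \<open>w\<^sub>J\<close>\<close>

definition toggle1 :: "nat set \<Rightarrow> nat set" where
  "toggle1 S = {m. (m = 1 \<and> 1 \<notin> S) \<or> (m \<noteq> 1 \<and> m \<in> S)}"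

lemma neg_set_map_gen_val: "neg_set (map (gen_val j) X) = {m. 0 < m \<and> gen_val j (- int m) \<in> set X}"
proof -
  have "- int m \<in> gen_val j ` set X \<longleftrightarrow> gen_val j (- int m) \<in> set X" for m
    by (metis image_eqI imageE gen_val_gen_val)
  then show ?thesis by (auto simp: neg_set_def)
qed

lemma neg_set_map_gen_val_0:
  assumes v: "signed_win n X" and n: "0 < n"
  shows "neg_set (map (gen_val 0) X) = toggle1 (neg_set X)"
proof -
  have one: "(1::int) \<in> set X \<longleftrightarrow> 1 \<notin> neg_set X"
    using signed_win_in_or_uminus_in[OF v, of 1] signed_win_uminus_notin[OF v, of 1] n
    by (auto simp: neg_set_def)
  have "gen_val 0 (- int m) = (if m = 1 then 1 else - int m)" for m
    by (simp add: gen_val_def)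
  then show ?thesis unfolding neg_set_map_gen_val toggle1_def
    using one by (auto simp: neg_set_def)
qed

lemma neg_set_map_gen_val_Suc:
  assumes "1 \<le> i"
  shows "neg_set (map (gen_val i) X) = Transposition.transpose i (Suc i) ` neg_set X"
proof -
  let ?t = "Transposition.transpose i (Suc i)"
  have e: "gen_val i (- int m) = - int (?t m)" for m
    using assms by (auto simp: gen_val_def transpose_def)
  have p: "0 < ?t m \<longleftrightarrow> 0 < m" for m using assms by (auto simp: transpose_def)
  show ?thesis unfolding neg_set_map_gen_val e
    by (auto simp: neg_set_def p image_iff) (metis transpose_involutory p)+
qed

lemma win_len_map_gen_val_0:
  assumes v: "signed_win n X" and one: "1 \<in> neg_set X"
  shows "win_len (map (gen_val 0) X) + 1 = win_len X"
proof -
  have n: "0 < n" using neg_set_subset[OF v] one by auto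
  have p1: "1 \<notin> set X" using signed_win_uminus_notin[OF v, of "-1"] one by (simp add: neg_set_def)
  have "gen_val 0 y < gen_val 0 x \<longleftrightarrow> y < x" if "x \<in> set X" "y \<in> set X" for x y
  proof -
    have "x \<noteq> 0" "y \<noteq> 0" "x \<noteq> 1" "y \<noteq> 1" using signed_win_nonzero[OF v] that p1 by auto
    then show ?thesis by (auto simp: gen_val_def)
  qed
  then have "inversions (map (gen_val 0) X) = inversions X" by (rule inversions_map)
  moreover have "neg_set (map (gen_val 0) X) = neg_set X - {1}"
    using neg_set_map_gen_val_0[OF v n] one by (auto simp: toggle1_def)
  moreover have "\<Sum>(neg_set X - {1}) + 1 = \<Sum>(neg_set X)"
    using sum.remove[OF finite_neg_set one, of id] by simp
  ultimately show ?thesis by (simp add: win_len_def)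
qed

lemma win_len_map_gen_val_Suc:
  assumes v: "signed_win n X" and i: "1 \<le> i" and a: "Suc i \<in> neg_set X" and b: "i \<notin> neg_set X"
  shows "win_len (map (gen_val i) X) + 1 = win_len X"
proof -
  have p1: "int (Suc i) \<notin> set X"
    using signed_win_uminus_notin[OF v, of "- int (Suc i)"] a by (simp add: neg_set_def add.commute)
  have mi: "- int i \<notin> set X" using b i by (simp add: neg_set_def)
  have "gen_val i y < gen_val i x \<longleftrightarrow> y < x" if "x \<in> set X" "y \<in> set X" for x y
  proof -
    have "x \<noteq> int (Suc i)" "y \<noteq> int (Suc i)" "x \<noteq> - int i" "y \<noteq> - int i"
      using that p1 mi by auto
    then show ?thesis using i by (auto simp: gen_val_def)
  qed
  then have "inversions (map (gen_val i) X) = inversions X" by (rule inversions_map)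
  moreover have "neg_set (map (gen_val i) X) = insert i (neg_set X - {Suc i})"
    unfolding neg_set_map_gen_val_Suc[OF i] using a b by (auto simp: transpose_def image_iff)
  moreover have "\<Sum>(insert i (neg_set X - {Suc i})) + 1 = \<Sum>(neg_set X)"
    using b sum.remove[OF finite_neg_set a, of id] by simp
  ultimately show ?thesis by (simp add: win_len_def)
qed

definition tail_count :: "nat \<Rightarrow> nat set \<Rightarrow> nat" where
  "tail_count t S = card (S \<inter> {t..})"

definition tail_dom :: "nat set \<Rightarrow> nat set \<Rightarrow> bool" where
  "tail_dom S T \<longleftrightarrow> (\<forall>t. tail_count t S \<le> tail_count t T)"

lemma tail_dom_refl: "tail_dom S S"
  by (simp add: tail_dom_def)

lemma tail_dom_trans: "tail_dom R S \<Longrightarrow> tail_dom S T \<Longrightarrow> tail_dom R T"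
  unfolding tail_dom_def using le_trans by blast

lemma tail_count_Suc:
  "finite S \<Longrightarrow> tail_count t S = tail_count (Suc t) S + (if t \<in> S then 1 else 0)"
proof -
  assume f: "finite S"
  have e: "S \<inter> {t..} = (S \<inter> {Suc t..}) \<union> (S \<inter> {t})" by auto
  have "card (S \<inter> {t..}) = card (S \<inter> {Suc t..}) + card (S \<inter> {t})"
    unfolding e by (rule card_Un_disjoint) (use f in auto)
  then show ?thesis by (auto simp: tail_count_def)
qed

lemma tail_count_cong: "S \<inter> {t..} = T \<inter> {t..} \<Longrightarrow> tail_count t S = tail_count t T"
  by (simp add: tail_count_def)

lemma tail_count_le_1:
  "finite S \<Longrightarrow> 0 \<notin> S \<Longrightarrow> t \<le> 1 \<Longrightarrow> tail_count t S = tail_count 2 S + (if 1 \<in> S then 1 else 0)"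
  using tail_count_Suc[of S 0] tail_count_Suc[of S 1] by (cases t) (auto simp: numeral_2_eq_2)

lemma tail_dom_toggle1:
  assumes fS: "finite S" and fT: "finite T" and z: "0 \<notin> S" "0 \<notin> T"
    and le: "tail_dom S T" and asc: "1 \<notin> T"
  shows "tail_dom (toggle1 S) (toggle1 T)" "tail_dom T (toggle1 T)"
proof -
  have hi: "tail_count t (toggle1 X) = tail_count t X" if "2 \<le> t" for t X
    by (rule tail_count_cong) (use that in \<open>auto simp: toggle1_def\<close>)
  have z': "0 \<notin> toggle1 S" "0 \<notin> toggle1 T" using z by (auto simp: toggle1_def)
  have ft: "finite (toggle1 S)" "finite (toggle1 T)"
    using fS fT finite_subset[of "toggle1 _" "insert 1 _"] by (auto simp: toggle1_def)
  have T1: "1 \<in> toggle1 T" using asc by (simp add: toggle1_def)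
  have "tail_count t (toggle1 S) \<le> tail_count t (toggle1 T)" for t
  proof (cases "2 \<le> t")
    case True then show ?thesis using hi le by (simp add: tail_dom_def)
  next
    case False
    then have t: "t \<le> 1" by simp
    have "tail_count t (toggle1 S) \<le> tail_count 2 S + 1"
      using tail_count_le_1[OF ft(1) z'(1) t] hi[of 2 S] by simp
    also have "\<dots> \<le> tail_count 2 T + 1" using le by (simp add: tail_dom_def)
    also have "\<dots> = tail_count t (toggle1 T)" using tail_count_le_1[OF ft(2) z'(2) t] hi[of 2 T] T1 by simp
    finally show ?thesis .
  qed
  then show "tail_dom (toggle1 S) (toggle1 T)" by (simp add: tail_dom_def)
  have "tail_count t T \<le> tail_count t (toggle1 T)" for t
  proof (cases "2 \<le> t")
    case True then show ?thesis using hi by simp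
  next
    case False
    then have t: "t \<le> 1" by simp
    show ?thesis
      using tail_count_le_1[OF fT z(2) t] tail_count_le_1[OF ft(2) z'(2) t] hi[of 2 T] T1 asc by simp
  qed
  then show "tail_dom T (toggle1 T)" by (simp add: tail_dom_def)
qed

lemma tail_count_transpose:
  assumes "finite S"
  shows "tail_count t (Transposition.transpose i (Suc i) ` S)
    = (if t = Suc i then tail_count (Suc (Suc i)) S + (if i \<in> S then 1 else 0) else tail_count t S)"
proof -
  let ?t = "Transposition.transpose i (Suc i)"
  have low: "tail_count t (?t ` S) = tail_count t S" if "t \<le> i" for t
  proof -
    have "?t ` S \<inter> {t..} = ?t ` (S \<inter> {t..})"
      using that by (auto simp: transpose_def image_iff split: if_splits)
    then show ?thesis unfolding tail_count_def using card_image[OF inj_on_transpose] by simp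
  qed
  have high: "tail_count t (?t ` S) = tail_count t S" if "Suc (Suc i) \<le> t" for t
    by (rule tail_count_cong) (use that in \<open>auto simp: transpose_def image_iff\<close>)
  have "Suc i \<in> ?t ` S \<longleftrightarrow> i \<in> S" by (auto simp: transpose_def image_iff)
  then have "tail_count (Suc i) (?t ` S) = tail_count (Suc (Suc i)) S + (if i \<in> S then 1 else 0)"
    using tail_count_Suc[of "?t ` S" "Suc i"] high[of "Suc (Suc i)"] assms by simp
  with low high show ?thesis by (cases "t \<le> i"; cases "t = Suc i") auto
qed

lemma tail_dom_transpose:
  assumes fS: "finite S" and fT: "finite T"
    and le: "tail_dom S T" and asc: "Suc i \<in> T \<longrightarrow> i \<in> T"
  shows "tail_dom (Transposition.transpose i (Suc i) ` S) (Transposition.transpose i (Suc i) ` T)"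
    and "tail_dom T (Transposition.transpose i (Suc i) ` T)"
proof -
  have split2: "tail_count i X = tail_count (Suc (Suc i)) X + (if Suc i \<in> X then 1 else 0) + (if i \<in> X then 1 else 0)"
    if "finite X" for X
    using tail_count_Suc[OF that, of i] tail_count_Suc[OF that, of "Suc i"] by simp
  have "tail_count (Suc (Suc i)) S + (if i \<in> S then 1 else 0)
      \<le> tail_count (Suc (Suc i)) T + (if i \<in> T then 1 else 0)"
  proof (cases "i \<in> T")
    case True then show ?thesis using le by (auto simp: tail_dom_def intro: le_SucI)
  next
    case False
    then have "Suc i \<notin> T" using asc by blast
    then show ?thesis using le[unfolded tail_dom_def, rule_format, of i]
        le[unfolded tail_dom_def, rule_format, of "Suc (Suc i)"] split2[OF fS] split2[OF fT] False
      by (auto split: if_splits)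
  qed
  then show "tail_dom (Transposition.transpose i (Suc i) ` S) (Transposition.transpose i (Suc i) ` T)"
    using le unfolding tail_dom_def tail_count_transpose[OF fS] tail_count_transpose[OF fT]
    by presburger
  show "tail_dom T (Transposition.transpose i (Suc i) ` T)"
    using tail_count_Suc[OF fT, of "Suc i"] asc
    by (auto simp: tail_dom_def tail_count_transpose[OF fT])
qed

lemma reduced_Cons:
  assumes j: "j < n" and a: "a \<in> lists {..<n}" and red: "win_len (window n (j # a)) = length (j # a)"
  shows "win_len (window n a) = length a"
    and "win_len (map (gen_val j) (window n a)) = win_len (window n a) + 1"
proof -
  let ?c = "canon_word n (window n a)"
  have "weq n (j # a) (j # ?c)"
    using weq_append_left[OF weq_canon_word[OF a], of "[j]"] j by simp
  then have "win_len (window n (j # a)) \<le> length (j # ?c)"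
    using win_len_window_le[of "j # ?c" n] j canon_word_lists weq_imp_window_eq by fastforce
  then have "win_len (window n (j # a)) \<le> win_len (window n a) + 1"
    using length_canon_word[OF signed_win_window] by simp
  moreover have "win_len (window n a) \<le> length a" using win_len_window_le[OF a] .
  ultimately show "win_len (window n a) = length a"
    and "win_len (map (gen_val j) (window n a)) = win_len (window n a) + 1"
    using red window_Cons[OF j] by auto
qed

lemma tail_dom_left_mult:
  assumes vX: "signed_win n X" and vY: "signed_win n Y" and j: "j < n"
    and up: "win_len (map (gen_val j) X) = win_len X + 1"
    and le: "tail_dom (neg_set Y) (neg_set X)"
  shows "tail_dom (neg_set (map (gen_val j) Y)) (neg_set (map (gen_val j) X))"
    and "tail_dom (neg_set X) (neg_set (map (gen_val j) X))"
proof -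
  have "tail_dom (neg_set (map (gen_val j) Y)) (neg_set (map (gen_val j) X))
    \<and> tail_dom (neg_set X) (neg_set (map (gen_val j) X))"
  proof (cases j)
    case 0
    have "1 \<notin> neg_set X" using win_len_map_gen_val_0[OF vX] up 0 by auto
    then show ?thesis
      using tail_dom_toggle1[OF finite_neg_set finite_neg_set zero_notin_neg_set zero_notin_neg_set le]
        neg_set_map_gen_val_0[OF vY] neg_set_map_gen_val_0[OF vX] 0 j by simp
  next
    case (Suc k)
    then have i: "1 \<le> j" by simp
    have "Suc j \<in> neg_set X \<longrightarrow> j \<in> neg_set X" using win_len_map_gen_val_Suc[OF vX i] up by auto
    then show ?thesis
      using tail_dom_transpose[OF finite_neg_set finite_neg_set le] neg_set_map_gen_val_Suc[OF i] by simp
  qed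
  then show "tail_dom (neg_set (map (gen_val j) Y)) (neg_set (map (gen_val j) X))"
    and "tail_dom (neg_set X) (neg_set (map (gen_val j) X))" by blast+
qed

text \<open>Necessity half of the Bruhat criterion: a left multiplication that raises the length never
  lowers the tail counts of the negative set, and it preserves tail dominance
  (\<open>tail_dom_left_mult\<close>).\<close>

lemma tail_dom_subseq_reduced:
  "a \<in> lists {..<n} \<Longrightarrow> win_len (window n a) = length a \<Longrightarrow> subseq b a
    \<Longrightarrow> tail_dom (neg_set (window n b)) (neg_set (window n a))"
proof (induction a arbitrary: b)
  case Nil
  then show ?case by (cases b) (simp_all add: tail_dom_refl)
next
  case (Cons j a)
  have j: "j < n" and a: "a \<in> lists {..<n}" using Cons.prems by auto
  note red = reduced_Cons[OF j a Cons.prems(2)]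
  note step = tail_dom_left_mult[OF signed_win_window _ j red(2)]
  have IH: "tail_dom (neg_set (window n b')) (neg_set (window n a))" if "subseq b' a" for b'
    using Cons.IH[OF a red(1) that] .
  show ?case
  proof (cases "b \<noteq> [] \<and> hd b = j")
    case True
    then obtain b' where "b = j # b'" "subseq b' a" using Cons.prems(3) by (cases b) auto
    then show ?thesis using step(1)[OF signed_win_window IH] by (simp add: window_Cons[OF j])
  next
    case False
    then have "subseq b a" using Cons.prems(3) by (cases b) auto
    then show ?thesis
      using tail_dom_trans[OF IH step(2)[OF signed_win_window IH]] by (simp add: window_Cons[OF j])
  qed
qed

lemma length_word_of: "finite J \<Longrightarrow> length (word_of J) = \<Sum>J"
proof -
  assume f: "finite J"
  have "length (concat (map wword L)) = sum_list L" for L by (induction L) auto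
  then show ?thesis unfolding word_of_def using f
    by (simp add: sum_list_distinct_conv_sum_set[of "sorted_list_of_set J" id, simplified])
qed

lemma reduced_word_of:
  assumes J: "J \<subseteq> {1..n}"
  shows "reduced_word n (elt n (word_of J)) (word_of J)"
proof -
  have l: "word_of J \<in> lists {..<n}" using word_of_lists[OF J] .
  have "blen n (elt n (word_of J)) = win_len (window n (word_of J))" using blen_elt[OF l] .
  also have "\<dots> = \<Sum>J" using window_word_of[OF J] by (simp add: win_len_def inversions_sorted)
  also have "\<dots> = length (word_of J)" using length_word_of finite_subset[OF J] by simp
  finally show ?thesis unfolding reduced_word_def using l by (simp add: mem_elt weq.refl)
qed

lemma suffix_wword: "m \<le> m' \<Longrightarrow> suffix (wword m) (wword m')"
proof (induction m')
  case (Suc m')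
  show ?case
  proof (cases "m = Suc m'")
    case False
    then have "suffix (wword m) (wword m')" using Suc by simp
    then show ?thesis by (cases "m' = 0") (auto simp: suffix_ConsI)
  qed simp
qed simp

lemma word_of_remove_Max:
  assumes "finite J" "J \<noteq> {}"
  shows "word_of J = word_of (J - {Max J}) @ wword (Max J)"
proof -
  have "sorted_wrt (<) (sorted_list_of_set (J - {Max J}) @ [Max J])"
    using assms by (auto simp: sorted_wrt_append less_le)
  moreover have "set (sorted_list_of_set (J - {Max J}) @ [Max J]) = J"
    using assms Max_in[OF assms] by (simp add: insert_absorb)
  ultimately have "sorted_list_of_set J = sorted_list_of_set (J - {Max J}) @ [Max J]"
    using strict_sorted_equal[OF sorted_list_of_set.strict_sorted_key_list_of_set[of J]] assms by simp
  then show ?thesis unfolding word_of_def by simp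
qed

lemma tail_dom_remove_Max:
  assumes fJ: "finite J" and fK: "finite K" and ne: "J \<noteq> {}" and le: "tail_dom J K"
  shows "K \<noteq> {}" "Max J \<le> Max K" "tail_dom (J - {Max J}) (K - {Max K})"
proof -
  have "1 \<le> tail_count (Max J) J"
    unfolding tail_count_def using Max_in[OF fJ ne] fJ by (auto simp: card_gt_0_iff Suc_le_eq)
  then have "1 \<le> tail_count (Max J) K" using le le_trans unfolding tail_dom_def by blast
  then obtain y where y: "y \<in> K" "Max J \<le> y" unfolding tail_count_def
    by (metis Int_iff atLeast_iff card.empty disjoint_iff not_one_le_zero)
  then show neK: "K \<noteq> {}" by auto
  show mJK: "Max J \<le> Max K" using y fK by (meson Max_ge le_trans)
  have "tail_count t (J - {Max J}) \<le> tail_count t (K - {Max K})" for t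
  proof (cases "t \<le> Max J")
    case True
    have "tail_count t (S - {Max S}) = tail_count t S - 1" if "finite S" "S \<noteq> {}" "t \<le> Max S" for S
    proof -
      have "(S - {Max S}) \<inter> {t..} = (S \<inter> {t..}) - {Max S}" by auto
      then show ?thesis unfolding tail_count_def using Max_in[OF that(1,2)] that by simp
    qed
    then have "tail_count t (J - {Max J}) = tail_count t J - 1"
      and "tail_count t (K - {Max K}) = tail_count t K - 1"
      using fJ fK ne neK True mJK by (meson le_trans)+
    then show ?thesis using le by (simp add: tail_dom_def diff_le_mono)
  next
    case False
    then have "(J - {Max J}) \<inter> {t..} = {}" using fJ by (auto dest: Max_ge)
    then show ?thesis by (simp add: tail_count_def)
  qed
  then show "tail_dom (J - {Max J}) (K - {Max K})" by (simp add: tail_dom_def)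
qed

lemma tail_dom_imp_subseq_word_of:
  "finite J \<Longrightarrow> finite K \<Longrightarrow> tail_dom J K \<Longrightarrow> subseq (word_of J) (word_of K)"
proof (induction "card J" arbitrary: J K)
  case 0
  then show ?case by (simp add: word_of_def)
next
  case (Suc c)
  then have ne: "J \<noteq> {}" by auto
  note dom = tail_dom_remove_Max[OF Suc.prems(1,2) ne Suc.prems(3)]
  have "subseq (word_of (J - {Max J})) (word_of (K - {Max K}))"
    using Suc.hyps(1)[of "J - {Max J}"] Suc.hyps(2) Suc.prems dom(3) Max_in[OF Suc.prems(1) ne] by simp
  moreover have "subseq (wword (Max J)) (wword (Max K))"
    using suffix_wword[OF dom(2)] by (rule suffix_imp_subseq)
  ultimately show ?case
    using list_emb_append_mono word_of_remove_Max[OF Suc.prems(1) ne] word_of_remove_Max[OF Suc.prems(2) dom(1)]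
    by metis
qed

lemma bruhat_wI_iff:
  assumes J: "J \<subseteq> {1..n}" and K: "K \<subseteq> {1..n}"
  shows "bruhat n (wI n J) (wI n K) \<longleftrightarrow> tail_dom J K"
proof
  assume "bruhat n (wI n J) (wI n K)"
  then obtain a b where a: "reduced_word n (elt n (word_of K)) a" and sb: "subseq b a"
    and b: "reduced_word n (elt n (word_of J)) b"
    unfolding bruhat_def wI_eq_elt_word_of by blast
  then have "weq n (word_of K) a" "weq n (word_of J) b" by (auto simp: reduced_word_def mem_elt)
  then have al: "a \<in> lists {..<n}" and Wa: "window n a = window n (word_of K)"
    and Wb: "window n b = window n (word_of J)"
    using weq_iff_window_eq by auto
  have "win_len (window n a) = length a"
    using a Wa blen_elt[OF word_of_lists[OF K]] by (simp add: reduced_word_def)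
  from tail_dom_subseq_reduced[OF al this sb] show "tail_dom J K"
    using Wa Wb window_word_of(2)[OF J] window_word_of(2)[OF K] by simp
next
  assume "tail_dom J K"
  then have "subseq (word_of J) (word_of K)"
    using tail_dom_imp_subseq_word_of finite_subset[OF J] finite_subset[OF K] by blast
  then show "bruhat n (wI n J) (wI n K)"
    unfolding bruhat_def wI_eq_elt_word_of using reduced_word_of[OF J] reduced_word_of[OF K] by blast
qed

section \<open>Tableau order and complement-reversal\<close>

lemma sorted_nth_mono:
  "sorted_wrt (<) xs \<Longrightarrow> p \<le> q \<Longrightarrow> q < length xs \<Longrightarrow> xs ! p \<le> xs ! q"
  for xs :: "nat list"
  using sorted_wrt_nth_less[of "(<)" xs p q] by (cases "p = q") auto

lemma nth_le_if_le_card_Int_atMost: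
  fixes xs :: "nat list"
  assumes s: "sorted_wrt (<) xs" and k: "1 \<le> k" and a: "k \<le> card (set xs \<inter> {..t})"
  shows "k \<le> length xs" "xs ! (k - 1) \<le> t"
proof -
  have "card (set xs \<inter> {..t}) \<le> length xs"
    using card_mono[of "set xs" "set xs \<inter> {..t}"] card_length[of xs] by auto
  with a show kl: "k \<le> length xs" by simp
  show "xs ! (k - 1) \<le> t"
  proof (rule ccontr)
    assume gt: "\<not> xs ! (k - 1) \<le> t"
    have "set xs \<inter> {..t} \<subseteq> set (take (k - 1) xs)"
    proof
      fix y assume y: "y \<in> set xs \<inter> {..t}"
      then obtain p where p: "p < length xs" "xs ! p = y" by (auto simp: in_set_conv_nth)
      have "p < k - 1"
      proof (rule ccontr)
        assume "\<not> p < k - 1"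
        then have "xs ! (k - 1) \<le> xs ! p" using sorted_nth_mono[OF s _ p(1)] by simp
        then show False using gt y p by auto
      qed
      with p show "y \<in> set (take (k - 1) xs)" by (auto simp: in_set_conv_nth)
    qed
    then have "card (set xs \<inter> {..t}) \<le> card (set (take (k - 1) xs))" by (rule card_mono[rotated]) simp
    also have "\<dots> \<le> k - 1" using card_length[of "take (k - 1) xs"] by simp
    finally show False using a k by simp
  qed
qed

lemma le_card_Int_atMost_if_nth_le:
  fixes xs :: "nat list"
  assumes s: "sorted_wrt (<) xs" and k: "1 \<le> k" and a: "k \<le> length xs" "xs ! (k - 1) \<le> t"
  shows "k \<le> card (set xs \<inter> {..t})"
proof -
  have "set (take k xs) \<subseteq> set xs \<inter> {..t}"
  proof
    fix y assume "y \<in> set (take k xs)"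
    then obtain p where p: "p < k" "p < length xs" "y = xs ! p" by (auto simp: in_set_conv_nth)
    have "p \<le> k - 1" "k - 1 < length xs" using p a k by auto
    then have "xs ! p \<le> xs ! (k - 1)" by (rule sorted_nth_mono[OF s])
    then show "y \<in> set xs \<inter> {..t}" using p a by auto
  qed
  then have "card (set (take k xs)) \<le> card (set xs \<inter> {..t})" by (rule card_mono[rotated]) simp
  moreover have "card (set (take k xs)) = k"
    using s a by (simp add: distinct_card strict_sorted_iff)
  ultimately show ?thesis by simp
qed

lemma le_card_Int_atMost_iff_kth:
  "finite A \<Longrightarrow> 1 \<le> k \<Longrightarrow> k \<le> card (A \<inter> {..t}) \<longleftrightarrow> k \<le> card A \<and> kth A k \<le> t"
  using nth_le_if_le_card_Int_atMost[OF sorted_list_of_set.strict_sorted_key_list_of_set, of k A t]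
    le_card_Int_atMost_if_nth_le[OF sorted_list_of_set.strict_sorted_key_list_of_set, of k A t]
  by (auto simp: kth_def)

lemma tab_le_iff_card_atMost:
  assumes fA: "finite A" and fB: "finite B"
  shows "tab_le A B \<longleftrightarrow> (\<forall>t. card (B \<inter> {..t}) \<le> card (A \<inter> {..t}))"
proof
  assume tab: "tab_le A B"
  show "\<forall>t. card (B \<inter> {..t}) \<le> card (A \<inter> {..t})"
  proof
    fix t
    define k where "k = card (B \<inter> {..t})"
    show "card (B \<inter> {..t}) \<le> card (A \<inter> {..t})"
    proof (cases "k = 0")
      case False
      then have k1: "1 \<le> k" by simp
      have "k \<le> card B \<and> kth B k \<le> t" using le_card_Int_atMost_iff_kth[OF fB k1, of t] by (simp add: k_def)
      moreover have "card B \<le> card A" "kth A k \<le> kth B k" using tab k1 calculation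
        by (auto simp: tab_le_def)
      ultimately show ?thesis using le_card_Int_atMost_iff_kth[OF fA k1] by (simp add: k_def)
    qed (simp add: k_def)
  qed
next
  assume c: "\<forall>t. card (B \<inter> {..t}) \<le> card (A \<inter> {..t})"
  define t0 where "t0 = Max (insert 0 (A \<union> B))"
  have "\<forall>x\<in>A \<union> B. x \<le> t0" using fA fB by (simp add: t0_def)
  then have "B \<inter> {..t0} = B" "A \<inter> {..t0} = A" by auto
  then have cAB: "card B \<le> card A" using c[rule_format, of t0] by simp
  have "kth A k \<le> kth B k" if k: "k \<in> {1..card B}" for k
  proof -
    have k1: "1 \<le> k" using k by simp
    have "k \<le> card (B \<inter> {..kth B k})" using le_card_Int_atMost_iff_kth[OF fB k1] k by simp
    then have "k \<le> card (A \<inter> {..kth B k})" using c le_trans by blast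
    then show ?thesis using le_card_Int_atMost_iff_kth[OF fA k1] by simp
  qed
  then show "tab_le A B" using cAB by (simp add: tab_le_def)
qed

lemma ext_le_iff_tab_le: "finite B \<Longrightarrow> ext_le A B \<longleftrightarrow> tab_le A B"
  unfolding ext_le_def tab_le_def by auto

lemma mem_gmap: "j \<in> gmap n I \<longleftrightarrow> j \<in> {1..n} \<and> n + 1 - j \<notin> I"
proof
  assume "j \<in> gmap n I"
  then obtain i where i: "i \<in> {1..n}" "i \<notin> I" "j = n - i + 1" by (auto simp: gmap_def)
  then have "j \<in> {1..n}" "n + 1 - j = i" by auto
  with i show "j \<in> {1..n} \<and> n + 1 - j \<notin> I" by simp
next
  assume "j \<in> {1..n} \<and> n + 1 - j \<notin> I"
  then show "j \<in> gmap n I" unfolding gmap_def by (intro CollectI exI[of _ "n + 1 - j"]) auto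
qed

lemma gmap_subset: "gmap n I \<subseteq> {1..n}"
  by (auto simp: mem_gmap)

lemma gmap_gmap: "I \<subseteq> {1..n} \<Longrightarrow> gmap n (gmap n I) = I"
  by (auto simp: mem_gmap)

lemma bij_betw_gmap: "bij_betw (gmap n) (Pow {1..n}) (Pow {1..n})"
  by (rule bij_betw_byWitness[where f' = "gmap n"]) (auto simp: gmap_gmap mem_gmap)

lemma bij_betw_alpha: "bij_betw (alpha n) (Pow {1..n}) (BnQ n)"
proof -
  have "alpha n = wI n \<circ> gmap n" by (simp add: alpha_def fun_eq_iff)
  moreover have "bij_betw (wI n) (Pow {1..n}) (BnQ n)"
    unfolding BnQ_eq using inj_on_wI by (simp add: bij_betw_def)
  ultimately show ?thesis using bij_betw_trans[OF bij_betw_gmap] by metis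
qed

text \<open>Since \<open>gmap\<close> complements and reverses, tail counts of \<open>gmap n A\<close> are complementary
  initial-segment counts of \<open>A\<close>.\<close>

lemma tail_count_gmap:
  assumes A: "A \<subseteq> {1..n}"
  shows "tail_count s (gmap n A) = card ({1..n} \<inter> {..n + 1 - s}) - card (A \<inter> {..n + 1 - s})"
proof -
  define r where "r = (\<lambda>j::nat. n + 1 - j)"
  have "gmap n A \<inter> {s..} = r ` (({1..n} - A) \<inter> {..n + 1 - s})"
  proof
    show "gmap n A \<inter> {s..} \<subseteq> r ` (({1..n} - A) \<inter> {..n + 1 - s})"
    proof
      fix x assume x: "x \<in> gmap n A \<inter> {s..}"
      then have "r x \<in> ({1..n} - A) \<inter> {..n + 1 - s}" "x = r (r x)"
        by (auto simp: mem_gmap r_def)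
      then show "x \<in> r ` (({1..n} - A) \<inter> {..n + 1 - s})" by blast
    qed
    show "r ` (({1..n} - A) \<inter> {..n + 1 - s}) \<subseteq> gmap n A \<inter> {s..}"
      by (auto simp: mem_gmap r_def)
  qed
  moreover have "inj_on r (({1..n} - A) \<inter> {..n + 1 - s})" unfolding r_def inj_on_def by auto
  ultimately have "tail_count s (gmap n A) = card (({1..n} - A) \<inter> {..n + 1 - s})"
    by (simp add: tail_count_def card_image)
  also have "({1..n} - A) \<inter> {..n + 1 - s} = ({1..n} \<inter> {..n + 1 - s}) - (A \<inter> {..n + 1 - s})" by auto
  also have "card \<dots> = card ({1..n} \<inter> {..n + 1 - s}) - card (A \<inter> {..n + 1 - s})"
    by (rule card_Diff_subset) (use A in auto)
  finally show ?thesis .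
qed

lemma tail_dom_gmap_iff:
  assumes A: "A \<subseteq> {1..n}" and B: "B \<subseteq> {1..n}"
  shows "tail_dom (gmap n A) (gmap n B) \<longleftrightarrow> (\<forall>t. card (B \<inter> {..t}) \<le> card (A \<inter> {..t}))"
proof
  assume "\<forall>t. card (B \<inter> {..t}) \<le> card (A \<inter> {..t})"
  then show "tail_dom (gmap n A) (gmap n B)"
    by (simp add: tail_dom_def tail_count_gmap[OF A] tail_count_gmap[OF B] diff_le_mono2)
next
  assume c: "tail_dom (gmap n A) (gmap n B)"
  show "\<forall>t. card (B \<inter> {..t}) \<le> card (A \<inter> {..t})"
  proof
    fix t
    define u where "u = min t n"
    have eA: "A \<inter> {..t} = A \<inter> {..u}" and eB: "B \<inter> {..t} = B \<inter> {..u}"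
      using A B by (auto simp: u_def)
    define M where "M = card ({1..n} \<inter> {..u})"
    have "card (A \<inter> {..u}) \<le> M" unfolding M_def by (rule card_mono) (use A in auto)
    moreover have "card (B \<inter> {..u}) \<le> M" unfolding M_def by (rule card_mono) (use B in auto)
    moreover have "M - card (A \<inter> {..u}) \<le> M - card (B \<inter> {..u})"
      using c[unfolded tail_dom_def, rule_format, of "n + 1 - u"]
      by (simp add: tail_count_gmap[OF A] tail_count_gmap[OF B] M_def u_def)
    ultimately have "card (B \<inter> {..u}) \<le> card (A \<inter> {..u})" by linarith
    then show "card (B \<inter> {..t}) \<le> card (A \<inter> {..t})" using eA eB by simp
  qed
qed

theorem mainTheorem13:
  fixes n :: nat
  shows "BnQ n = wI n ` Pow {1..n}
    \<and> bij_betw (alpha n) (Pow {1..n}) (BnQ n)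
    \<and> (\<forall>A\<in>Pow {1..n}. \<forall>B\<in>Pow {1..n}. ext_le A B \<longleftrightarrow> bruhat n (alpha n A) (alpha n B))"
proof (intro conjI ballI)
  show "BnQ n = wI n ` Pow {1..n}" by (rule BnQ_eq)
  show "bij_betw (alpha n) (Pow {1..n}) (BnQ n)" by (rule bij_betw_alpha)
  fix A B assume "A \<in> Pow {1..n}" "B \<in> Pow {1..n}"
  then have A: "A \<subseteq> {1..n}" and B: "B \<subseteq> {1..n}" by auto
  have "ext_le A B \<longleftrightarrow> tab_le A B"
    using ext_le_iff_tab_le finite_subset[OF B] by blast
  also have "\<dots> \<longleftrightarrow> (\<forall>t. card (B \<inter> {..t}) \<le> card (A \<inter> {..t}))"
    using tab_le_iff_card_atMost finite_subset[OF A] finite_subset[OF B] by blast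
  also have "\<dots> \<longleftrightarrow> tail_dom (gmap n A) (gmap n B)"
    using tail_dom_gmap_iff[OF A B] by simp
  also have "\<dots> \<longleftrightarrow> bruhat n (alpha n A) (alpha n B)"
    using bruhat_wI_iff[OF gmap_subset gmap_subset] by (simp add: alpha_def)
  finally show "ext_le A B \<longleftrightarrow> bruhat n (alpha n A) (alpha n B)" .
qed

end
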